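(* Let $k>t+1$, $n>2k-t$, and let $\mathcal{S}_a$ be a maximal set of $k$-spaces in $\mathrm{AG}(n,q)$ pairwise intersecting in at least a $t$-space. Let $\psi(\mathcal{S}_a)=\min\{\dim T: T\text{ an affine subspace of }\mathrm{AG}(n,q),\ \dim(T\cap\alpha)\geq t\ \forall\alpha\in\mathcal{S}_a\}$ and let $\mathcal{T}$ be the set of all affine $\psi(\mathcal{S}_a)$-dimensional subspaces meeting every element of $\mathcal{S}_a$ in at least a $t$-space. Then: (1) $t\leq\psi(\mathcal{S}_a)\leq k$, and if $\psi(\mathcal{S}_a)=t$ then $\mathcal{S}_a$ is a $t$-pencil; (2) if $T\in\mathcal{T}$, all affine $k$-spaces containing $T$ belong to $\mathcal{S}_a$; (3) any two elements of $\mathcal{T}$ intersect (in $\mathrm{AG}(n,q)$) in at least a $t$-space.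
   Context: Affine subspaces intersect in at least a $t$-space if their affine intersection has dimension at least $t$. A $t$-pencil is the set of all affine $k$-spaces through a fixed affine $t$-space. Maximal means no further affine $k$-space can be added keeping the property. *)

theory Defs
  imports "HOL-Analysis.Analysis"
begin

text \<open>The affine space AG(n,q): points are vectors in 'a^'n, where 'a is a finite
field (q = CARD('a)) and n = CARD('n).\<close>

definition aff_subspace :: "('a::field ^ 'n) set \<Rightarrow> bool" where
  "aff_subspace S \<longleftrightarrow> (\<exists>x V. vec.subspace V \<and> S = (\<lambda>v. x + v) ` V)"

definition aff_dimension :: "('a::field ^ 'n) set \<Rightarrow> nat" where
  "aff_dimension S = vec.dim {a - b | a b. a \<in> S \<and> b \<in> S}"

definition kspace :: "nat \<Rightarrow> ('a::field ^ 'n) set \<Rightarrow> bool" where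
  "kspace k S \<longleftrightarrow> aff_subspace S \<and> aff_dimension S = k"

definition meets_in :: "nat \<Rightarrow> ('a::field ^ 'n) set \<Rightarrow> ('a ^ 'n) set \<Rightarrow> bool" where
  "meets_in t A B \<longleftrightarrow> A \<inter> B \<noteq> {} \<and> aff_dimension (A \<inter> B) \<ge> t"

definition pencil :: "nat \<Rightarrow> ('a::field ^ 'n) set \<Rightarrow> ('a ^ 'n) set set" where
  "pencil k P = {A. kspace k A \<and> P \<subseteq> A}"

definition maximal_tint_family :: "nat \<Rightarrow> nat \<Rightarrow> ('a::field ^ 'n) set set \<Rightarrow> bool" where
  "maximal_tint_family k t S \<longleftrightarrow>
     (\<forall>A\<in>S. kspace k A) \<and>
     (\<forall>A\<in>S. \<forall>B\<in>S. meets_in t A B) \<and>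
     (\<forall>A. kspace k A \<and> A \<notin> S \<longrightarrow> (\<exists>B\<in>S. \<not> meets_in t A B))"

definition psi :: "nat \<Rightarrow> ('a::field ^ 'n) set set \<Rightarrow> nat" where
  "psi t S = (LEAST d. \<exists>T. aff_subspace T \<and> aff_dimension T = d \<and> (\<forall>A\<in>S. meets_in t T A))"

definition Tset :: "nat \<Rightarrow> ('a::field ^ 'n) set set \<Rightarrow> ('a ^ 'n) set set" where
  "Tset t S = {T. kspace (psi t S) T \<and> (\<forall>A\<in>S. meets_in t T A)}"

end

theory Submission
  imports Defs
begin

(* By maximality, a k-space lies in S as soon as it meets every member of S in at least a
   t-space; so every k-space through a member of Tset lies in S, which is (2). If psi = t,
   a t-space meeting every member of S in a t-space is contained in each of them, and S is
   the pencil through it. For (3), suppose T1, T2 in Tset (of dimension psi <= k) meet in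
   less than a t-space. Then they extend to k-spaces A1, A2 that still do: if T1, T2 are
   disjoint, extend them inside translates of one hyperplane not containing the difference
   of their base points; otherwise extend their directions one vector at a time in general
   position, so that the directions meet in dimension at most
   max(dim(T1 \<inter> T2), 2k - n) < t, using n > 2k - t. By (2), A1 and A2 are in S,
   contradicting that S is t-intersecting. *)

context vector_space
begin

lemma subset_subspace_sums:
  assumes "subspace S" "subspace T"
  shows "S \<subseteq> {x + y |x y. x \<in> S \<and> y \<in> T}" "T \<subseteq> {x + y |x y. x \<in> S \<and> y \<in> T}"
proof -
  show "S \<subseteq> {x + y |x y. x \<in> S \<and> y \<in> T}"
    using subspace_0[OF assms(2)] by (metis (mono_tags, lifting) add.right_neutral mem_Collect_eq subsetI)
  show "T \<subseteq> {x + y |x y. x \<in> S \<and> y \<in> T}"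
    using subspace_0[OF assms(1)] by (metis (mono_tags, lifting) add.left_neutral mem_Collect_eq subsetI)
qed

end

context finite_dimensional_vector_space
begin

lemma dim_span_insert_notin:
  assumes "subspace U" "e \<notin> U"
  shows "dim (span (insert e U)) = dim U + 1"
  using assms by (metis dim_insert dim_span span_eq_iff)

lemma choose_subspace_between:
  assumes "subspace U" "subspace H" "U \<subseteq> H" "dim U \<le> k" "k \<le> dim H"
  obtains U' where "subspace U'" "U \<subseteq> U'" "U' \<subseteq> H" "dim U' = k"
proof -
  have "\<exists>U'. subspace U' \<and> U \<subseteq> U' \<and> U' \<subseteq> H \<and> dim U' = k"
    using \<open>dim U \<le> k\<close>
  proof (induction k rule: dec_induct)
    case base
    then show ?case using assms by blast
  next
    case (step m)
    then obtain U' where U': "subspace U'" "U \<subseteq> U'" "U' \<subseteq> H" "dim U' = m" by blast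
    have "\<not> H \<subseteq> U'"
      using dim_subset[of H U'] U'(4) step.hyps(2) assms(5) by linarith
    then obtain e where e: "e \<in> H" "e \<notin> U'" by blast
    have "span (insert e U') \<subseteq> H"
      using e U'(3) assms(2) by (simp add: span_minimal)
    moreover have "U \<subseteq> span (insert e U')"
      using U'(2) span_superset by blast
    ultimately show ?case
      using dim_span_insert_notin[OF U'(1) e(2)] U'(4) by (metis Suc_eq_plus1 subspace_span)
  qed
  then show ?thesis using that by blast
qed

lemma span_insert_Int_eq:
  assumes "subspace U" "subspace W" "e \<notin> {x + y |x y. x \<in> U \<and> y \<in> W}"
  shows "span (insert e U) \<inter> W = U \<inter> W"
proof
  show "U \<inter> W \<subseteq> span (insert e U) \<inter> W"
    using span_superset by blast
  show "span (insert e U) \<inter> W \<subseteq> U \<inter> W"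
  proof
    fix y assume y: "y \<in> span (insert e U) \<inter> W"
    show "y \<in> U \<inter> W"
    proof (rule ccontr)
      assume "y \<notin> U \<inter> W"
      with y assms(1) have "e \<in> span (insert y U)"
        by (metis IntD1 IntD2 IntI in_span_insert span_eq_iff)
      moreover have "span (insert y U) \<subseteq> {x + y |x y. x \<in> U \<and> y \<in> W}"
      proof (rule span_minimal)
        show "insert y U \<subseteq> {x + y |x y. x \<in> U \<and> y \<in> W}"
          using y subset_subspace_sums[OF assms(1,2)] by blast
      qed (simp add: assms subspace_sums)
      ultimately show False using assms(3) by blast
    qed
  qed
qed

lemma choose_insert_small_Int:
  assumes "subspace U" "subspace W" "dim U < dimension"
  obtains e where "e \<notin> U"
    "dim (span (insert e U) \<inter> W) \<le> max (dim (U \<inter> W)) (dim U + 1 + dim W - dimension)"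
proof (cases "{x + y |x y. x \<in> U \<and> y \<in> W} = UNIV")
  case True
  have "span U \<noteq> UNIV" using assms(3) dim_eq_full[of U] by linarith
  then have "U \<noteq> UNIV" using assms(1) span_eq_iff by metis
  then obtain e where e: "e \<notin> U" by blast
  let ?U' = "span (insert e U)"
  have "UNIV \<subseteq> {x + y |x y. x \<in> ?U' \<and> y \<in> W}"
    using True span_superset by blast
  then have "dim {x + y |x y. x \<in> ?U' \<and> y \<in> W} = dimension"
    by (simp add: dimension_def top.extremum_unique)
  then have "dim (?U' \<inter> W) = dim U + 1 + dim W - dimension"
    using dim_sums_Int[OF subspace_span assms(2), of "insert e U"]
      dim_span_insert_notin[OF assms(1) e] by linarith
  then show ?thesis using that e by simp
next
  case False
  then obtain e where e: "e \<notin> {x + y |x y. x \<in> U \<and> y \<in> W}" by blast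
  then have "e \<notin> U" using subset_subspace_sums(1)[OF assms(1,2)] by blast
  then show ?thesis
    using that span_insert_Int_eq[OF assms(1,2) e] by simp
qed

lemma choose_superspace_small_Int:
  assumes "subspace U" "subspace W" "dim U \<le> k" "k \<le> dimension"
  obtains U' where "subspace U'" "U \<subseteq> U'" "dim U' = k"
    "dim (U' \<inter> W) \<le> max (dim (U \<inter> W)) (k + dim W - dimension)"
proof -
  have "\<exists>U'. subspace U' \<and> U \<subseteq> U' \<and> dim U' = k
          \<and> dim (U' \<inter> W) \<le> max (dim (U \<inter> W)) (k + dim W - dimension)"
    using \<open>dim U \<le> k\<close>
  proof (induction k rule: dec_induct)
    case base
    then show ?case using assms(1) by auto
  next
    case (step m)
    then obtain U' where U': "subspace U'" "U \<subseteq> U'" "dim U' = m"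
      "dim (U' \<inter> W) \<le> max (dim (U \<inter> W)) (m + dim W - dimension)" by blast
    obtain e where e: "e \<notin> U'"
      "dim (span (insert e U') \<inter> W) \<le> max (dim (U' \<inter> W)) (m + 1 + dim W - dimension)"
      using choose_insert_small_Int[OF U'(1) assms(2)] U'(3) step.hyps(2) assms(4) by auto
    have "U \<subseteq> span (insert e U')"
      using U'(2) span_superset by blast
    moreover have "dim (span (insert e U')) = Suc m"
      using dim_span_insert_notin[OF U'(1) e(1)] U'(3) by simp
    ultimately show ?case
      using e(2) U'(4) by (intro exI[of _ "span (insert e U')"]) auto
  qed
  then show ?thesis using that by blast
qed

lemma choose_superspaces_small_Int:
  assumes "subspace D1" "subspace D2" "dim D1 \<le> k" "dim D2 \<le> k" "dim (D1 \<inter> D2) < t"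
    "k \<le> dimension" "2 * k < dimension + t"
  obtains U1 U2 where "subspace U1" "subspace U2" "D1 \<subseteq> U1" "D2 \<subseteq> U2"
    "dim U1 = k" "dim U2 = k" "dim (U1 \<inter> U2) < t"
proof -
  obtain U1 where U1: "subspace U1" "D1 \<subseteq> U1" "dim U1 = k"
    "dim (U1 \<inter> D2) \<le> max (dim (D1 \<inter> D2)) (k + dim D2 - dimension)"
    using choose_superspace_small_Int[OF assms(1,2,3,6)] by blast
  obtain U2 where U2: "subspace U2" "D2 \<subseteq> U2" "dim U2 = k"
    "dim (U2 \<inter> U1) \<le> max (dim (D2 \<inter> U1)) (k + dim U1 - dimension)"
    using choose_superspace_small_Int[OF assms(2) U1(1) assms(4,6)] by blast
  have "dim (U1 \<inter> U2) = dim (U2 \<inter> U1)" "dim (D2 \<inter> U1) = dim (U1 \<inter> D2)"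
    by (simp_all add: Int_commute)
  then have "dim (U1 \<inter> U2) < t"
    using U1(3,4) U2(4) assms(4,5,7) by linarith
  with U1 U2 that show ?thesis by blast
qed

lemma choose_hyperplane_avoiding:
  assumes "subspace S" "v \<notin> S"
  obtains H where "subspace H" "S \<subseteq> H" "v \<notin> H" "dim H = dimension - 1"
proof -
  obtain B where B: "B \<subseteq> S" "independent B" "S \<subseteq> span B"
    by (metis basis_exists)
  have "v \<notin> span B"
    using span_minimal[OF B(1) assms(1)] assms(2) by blast
  then have "independent (insert v B)"
    using B(2) by (rule independent_insertI)
  then obtain C where C: "insert v B \<subseteq> C" "independent C" "UNIV \<subseteq> span C"
    by (metis maximal_independent_subset_extend subset_UNIV)
  have "card C = dimension"
    using dim_span_eq_card_independent[OF C(2)] C(3)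
    by (metis dimension_def dim_UNIV top.extremum_unique)
  have "dim (span (C - {v})) = dimension - 1"
  proof -
    have "independent (C - {v})"
      using C(2) independent_mono by blast
    then show ?thesis
      using C(1) \<open>card C = dimension\<close> by (simp add: dim_eq_card_independent)
  qed
  moreover have "S \<subseteq> span (C - {v})"
  proof -
    have "B \<subseteq> C - {v}" using B(1) C(1) assms(2) by blast
    then show ?thesis using span_mono B(3) by (meson subset_trans)
  qed
  moreover have "v \<notin> span (C - {v})"
    using C(1,2) unfolding dependent_def by blast
  ultimately show ?thesis using that subspace_span by blast
qed

end

lemma differences_translation:
  fixes V :: "('a::field ^ 'n) set"
  assumes "vec.subspace V"
  shows "{a - b | a b. a \<in> (+) x ` V \<and> b \<in> (+) x ` V} = V"
proof
  show "{a - b | a b. a \<in> (+) x ` V \<and> b \<in> (+) x ` V} \<subseteq> V"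
    using vec.subspace_diff[OF assms] by auto
  show "V \<subseteq> {a - b | a b. a \<in> (+) x ` V \<and> b \<in> (+) x ` V}"
  proof
    fix v assume "v \<in> V"
    then have "x + v \<in> (+) x ` V" "x + 0 \<in> (+) x ` V"
      using vec.subspace_0[OF assms] by blast+
    moreover have "v = (x + v) - (x + 0)" by simp
    ultimately show "v \<in> {a - b | a b. a \<in> (+) x ` V \<and> b \<in> (+) x ` V}"
      by blast
  qed
qed

lemma aff_dimension_translation:
  fixes V :: "('a::field ^ 'n) set"
  assumes "vec.subspace V"
  shows "aff_dimension ((+) x ` V) = vec.dim V"
  unfolding aff_dimension_def differences_translation[OF assms] ..

lemma kspace_translation:
  fixes V :: "('a::field ^ 'n) set"
  assumes "vec.subspace V"
  shows "kspace (vec.dim V) ((+) x ` V)"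
  unfolding kspace_def aff_subspace_def using assms aff_dimension_translation by blast

lemma aff_dimension_mono:
  fixes A B :: "('a::field ^ 'n) set"
  assumes "A \<subseteq> B"
  shows "aff_dimension A \<le> aff_dimension B"
  unfolding aff_dimension_def by (rule vec.dim_subset) (use assms in blast)

lemma aff_subspace_translation_at:
  fixes S :: "('a::field ^ 'n) set"
  assumes "aff_subspace S" "p \<in> S"
  obtains V where "vec.subspace V" "S = (+) p ` V"
proof -
  obtain x V where V: "vec.subspace V" "S = (+) x ` V"
    using assms(1) unfolding aff_subspace_def by blast
  then obtain u where u: "u \<in> V" "p = x + u"
    using assms(2) by blast
  have "(+) u ` V = V"
  proof
    show "(+) u ` V \<subseteq> V" using vec.subspace_add[OF V(1) u(1)] by blast
    show "V \<subseteq> (+) u ` V"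
    proof
      fix v assume "v \<in> V"
      then have "v - u \<in> V" using vec.subspace_diff[OF V(1) _ u(1)] by blast
      then show "v \<in> (+) u ` V" by (metis add_diff_cancel_left' diff_add_cancel image_eqI add.commute)
    qed
  qed
  then have "S = (+) p ` V"
    using V(2) u(2) by (metis (no_types, lifting) image_image add.assoc image_cong)
  with V(1) that show ?thesis by blast
qed

lemma aff_subspace_subset_if_dim_le_Int:
  fixes T A :: "('a::field ^ 'n) set"
  assumes "aff_subspace T" "aff_subspace A" "T \<inter> A \<noteq> {}"
    "aff_dimension T \<le> aff_dimension (T \<inter> A)"
  shows "T \<subseteq> A"
proof -
  obtain p where p: "p \<in> T" "p \<in> A" using assms(3) by blast
  obtain DT where DT: "vec.subspace DT" "T = (+) p ` DT"
    using aff_subspace_translation_at[OF assms(1) p(1)] by blast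
  obtain DA where DA: "vec.subspace DA" "A = (+) p ` DA"
    using aff_subspace_translation_at[OF assms(2) p(2)] by blast
  have "vec.dim DT \<le> vec.dim (DT \<inter> DA)"
    using assms(4) DT DA
    by (simp add: translation_Int[symmetric] aff_dimension_translation vec.subspace_inter)
  then have "DT \<inter> DA = DT"
    using vec.subspace_dim_equal[of "DT \<inter> DA" DT] DT(1) DA(1) vec.subspace_inter by blast
  then show ?thesis using DT(2) DA(2) by blast
qed

lemma meets_in_le_aff_dimension:
  assumes "meets_in t T A"
  shows "t \<le> aff_dimension T"
  using assms aff_dimension_mono[of "T \<inter> A" T] unfolding meets_in_def by simp

lemma meets_in_mono:
  assumes "meets_in t T B" "T \<subseteq> A"
  shows "meets_in t A B"
proof -
  have "T \<inter> B \<subseteq> A \<inter> B" using assms(2) by blast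
  then show ?thesis
    using assms(1) aff_dimension_mono[of "T \<inter> B" "A \<inter> B"] unfolding meets_in_def by auto
qed

lemma exists_kspace:
  assumes "k \<le> CARD('n)"
  shows "\<exists>A :: ('a::field ^ 'n) set. kspace k A"
proof -
  obtain U :: "('a ^ 'n) set" where U: "vec.subspace U" "vec.dim U = k"
    using vec.choose_subspace_between[of "{0}" UNIV k] assms
    by (auto simp: vec.subspace_single_0 vec_dim_card card_cart_basis)
  then show ?thesis using kspace_translation by metis
qed

lemma choose_disjoint_kspaces_over:
  fixes T1 T2 :: "('a::field ^ 'n) set"
  assumes "aff_subspace T1" "aff_subspace T2" "T1 \<inter> T2 = {}"
    "aff_dimension T1 \<le> k" "aff_dimension T2 \<le> k" "k < CARD('n)"
  obtains A1 A2 where "kspace k A1" "kspace k A2" "T1 \<subseteq> A1" "T2 \<subseteq> A2" "A1 \<inter> A2 = {}"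
proof -
  obtain x1 D1 where D1: "vec.subspace D1" "T1 = (+) x1 ` D1"
    using assms(1) unfolding aff_subspace_def by blast
  obtain x2 D2 where D2: "vec.subspace D2" "T2 = (+) x2 ` D2"
    using assms(2) unfolding aff_subspace_def by blast
  let ?D = "{a + b |a b. a \<in> D1 \<and> b \<in> D2}"
  have "x2 - x1 \<notin> ?D"
  proof
    assume "x2 - x1 \<in> ?D"
    then obtain a b where ab: "a \<in> D1" "b \<in> D2" "x2 - x1 = a + b" by blast
    then have "x1 + a = x2 + - b" by (simp add: algebra_simps)
    moreover have "- b \<in> D2" using vec.subspace_neg[OF D2(1) ab(2)] .
    ultimately have "x1 + a \<in> T1 \<inter> T2" using D1(2) D2(2) ab(1) by blast
    with assms(3) show False by blast
  qed
  then obtain H where H: "vec.subspace H" "?D \<subseteq> H" "x2 - x1 \<notin> H" "vec.dim H = CARD('n) - 1"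
    using vec.choose_hyperplane_avoiding[OF vec.subspace_sums[OF D1(1) D2(1)]]
    unfolding vec.dimension_def card_cart_basis by blast
  have "D1 \<subseteq> H" "D2 \<subseteq> H"
    using vec.subset_subspace_sums[OF D1(1) D2(1)] H(2) by blast+
  moreover have "vec.dim D1 \<le> k" "vec.dim D2 \<le> k"
    using assms(4,5) by (simp_all add: D1 D2 aff_dimension_translation)
  moreover have "k \<le> vec.dim H"
    using H(4) assms(6) by linarith
  ultimately obtain U1 U2 where U1: "vec.subspace U1" "D1 \<subseteq> U1" "U1 \<subseteq> H" "vec.dim U1 = k"
    and U2: "vec.subspace U2" "D2 \<subseteq> U2" "U2 \<subseteq> H" "vec.dim U2 = k"
    using vec.choose_subspace_between[OF D1(1) H(1)] vec.choose_subspace_between[OF D2(1) H(1)]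
    by metis
  have "(+) x1 ` U1 \<inter> (+) x2 ` U2 = {}"
  proof (rule ccontr)
    assume "(+) x1 ` U1 \<inter> (+) x2 ` U2 \<noteq> {}"
    then obtain u1 u2 where u: "u1 \<in> U1" "u2 \<in> U2" "x1 + u1 = x2 + u2" by blast
    then have "x2 - x1 = u1 - u2" by (simp add: algebra_simps)
    moreover have "u1 - u2 \<in> H" using u(1,2) U1(3) U2(3) vec.subspace_diff[OF H(1)] by blast
    ultimately show False using H(3) by simp
  qed
  moreover have "T1 \<subseteq> (+) x1 ` U1" "T2 \<subseteq> (+) x2 ` U2"
    using D1(2) D2(2) U1(2) U2(2) by blast+
  moreover have "kspace k ((+) x1 ` U1)" "kspace k ((+) x2 ` U2)"
    using kspace_translation[OF U1(1)] kspace_translation[OF U2(1)] U1(4) U2(4) by simp_all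
  ultimately show ?thesis using that by blast
qed

lemma choose_kspaces_over_small_Int:
  fixes T1 T2 :: "('a::field ^ 'n) set"
  assumes "aff_subspace T1" "aff_subspace T2" "T1 \<inter> T2 \<noteq> {}" "aff_dimension (T1 \<inter> T2) < t"
    "aff_dimension T1 \<le> k" "aff_dimension T2 \<le> k" "k \<le> CARD('n)" "2 * k < CARD('n) + t"
  obtains A1 A2 where "kspace k A1" "kspace k A2" "T1 \<subseteq> A1" "T2 \<subseteq> A2"
    "aff_dimension (A1 \<inter> A2) < t"
proof -
  obtain p where p: "p \<in> T1" "p \<in> T2" using assms(3) by blast
  obtain D1 where D1: "vec.subspace D1" "T1 = (+) p ` D1"
    using aff_subspace_translation_at[OF assms(1) p(1)] by blast
  obtain D2 where D2: "vec.subspace D2" "T2 = (+) p ` D2"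
    using aff_subspace_translation_at[OF assms(2) p(2)] by blast
  have dims: "vec.dim D1 \<le> k" "vec.dim D2 \<le> k" "vec.dim (D1 \<inter> D2) < t"
    using assms(4,5,6) D1 D2
    by (simp_all add: translation_Int[symmetric] aff_dimension_translation vec.subspace_inter)
  obtain U1 U2 where U: "vec.subspace U1" "vec.subspace U2" "D1 \<subseteq> U1" "D2 \<subseteq> U2"
    "vec.dim U1 = k" "vec.dim U2 = k" "vec.dim (U1 \<inter> U2) < t"
    by (rule vec.choose_superspaces_small_Int[unfolded vec.dimension_def card_cart_basis,
          OF D1(1) D2(1) dims assms(7,8)])
  have "aff_dimension ((+) p ` U1 \<inter> (+) p ` U2) < t"
    using U(1,2,7) by (simp add: translation_Int[symmetric] aff_dimension_translation vec.subspace_inter)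
  moreover have "T1 \<subseteq> (+) p ` U1" "T2 \<subseteq> (+) p ` U2"
    using D1(2) D2(2) U(3,4) by blast+
  moreover have "kspace k ((+) p ` U1)" "kspace k ((+) p ` U2)"
    using kspace_translation[OF U(1)] kspace_translation[OF U(2)] U(5,6) by simp_all
  ultimately show ?thesis using that by blast
qed

lemma choose_kspaces_over_not_meets_in:
  fixes T1 T2 :: "('a::field ^ 'n) set"
  assumes "aff_subspace T1" "aff_subspace T2" "\<not> meets_in t T1 T2"
    "aff_dimension T1 \<le> k" "aff_dimension T2 \<le> k" "t \<le> k" "2 * k < CARD('n) + t"
  obtains A1 A2 where "kspace k A1" "kspace k A2" "T1 \<subseteq> A1" "T2 \<subseteq> A2" "\<not> meets_in t A1 A2"
proof (cases "T1 \<inter> T2 = {}")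
  case True
  have "k < CARD('n)" using assms(6,7) by linarith
  then obtain A1 A2 where "kspace k A1" "kspace k A2" "T1 \<subseteq> A1" "T2 \<subseteq> A2" "A1 \<inter> A2 = {}"
    using choose_disjoint_kspaces_over[OF assms(1,2) True assms(4,5)] by blast
  then show ?thesis using that unfolding meets_in_def by blast
next
  case False
  then have "aff_dimension (T1 \<inter> T2) < t"
    using assms(3) unfolding meets_in_def by simp
  moreover have "k \<le> CARD('n)" using assms(6,7) by linarith
  ultimately obtain A1 A2 where "kspace k A1" "kspace k A2" "T1 \<subseteq> A1" "T2 \<subseteq> A2"
    "aff_dimension (A1 \<inter> A2) < t"
    using choose_kspaces_over_small_Int[OF assms(1,2) False _ assms(4,5) _ assms(7)] by blast
  then show ?thesis using that unfolding meets_in_def by (meson not_le)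
qed

lemma maximal_tint_family_memI:
  assumes "maximal_tint_family k t S" "\<forall>B\<in>S. meets_in t T B" "kspace k A" "T \<subseteq> A"
  shows "A \<in> S"
proof (rule ccontr)
  assume "A \<notin> S"
  then obtain B where "B \<in> S" "\<not> meets_in t A B"
    using assms(1,3) unfolding maximal_tint_family_def by blast
  then show False
    using assms(2,4) meets_in_mono by blast
qed

lemma maximal_tint_family_nonempty:
  fixes S :: "('a::field ^ 'n) set set"
  assumes "maximal_tint_family k t S" "k \<le> CARD('n)"
  shows "S \<noteq> {}"
proof -
  obtain A :: "('a ^ 'n) set" where "kspace k A"
    using exists_kspace[OF assms(2)] by blast
  then show ?thesis
    using assms(1) unfolding maximal_tint_family_def by blast
qed

lemma maximal_tint_family_eq_pencil:
  assumes "maximal_tint_family k t S" "kspace t P" "\<forall>A\<in>S. meets_in t P A"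
  shows "S = pencil k P"
proof
  show "S \<subseteq> pencil k P"
  proof
    fix A assume "A \<in> S"
    then have A: "kspace k A" "meets_in t P A"
      using assms unfolding maximal_tint_family_def by blast+
    then have "P \<subseteq> A"
      using assms(2) unfolding kspace_def meets_in_def
      by (intro aff_subspace_subset_if_dim_le_Int) auto
    with A(1) show "A \<in> pencil k P" unfolding pencil_def by blast
  qed
  show "pencil k P \<subseteq> S"
    using maximal_tint_family_memI[OF assms(1,3)] unfolding pencil_def by blast
qed

lemma maximal_tint_family_meets_in:
  fixes T1 T2 :: "('a::field ^ 'n) set"
  assumes "maximal_tint_family k t S" "t \<le> k" "2 * k < CARD('n) + t"
    "aff_subspace T1" "aff_dimension T1 \<le> k" "\<forall>A\<in>S. meets_in t T1 A"
    "aff_subspace T2" "aff_dimension T2 \<le> k" "\<forall>A\<in>S. meets_in t T2 A"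
  shows "meets_in t T1 T2"
proof (rule ccontr)
  assume "\<not> meets_in t T1 T2"
  then obtain A1 A2 where "kspace k A1" "kspace k A2" "T1 \<subseteq> A1" "T2 \<subseteq> A2"
    "\<not> meets_in t A1 A2"
    using choose_kspaces_over_not_meets_in[OF assms(4,7) _ assms(5,8,2,3)] by blast
  moreover have "A1 \<in> S" "A2 \<in> S"
    using maximal_tint_family_memI[OF assms(1)] assms(6,9) calculation by blast+
  ultimately show False
    using assms(1) unfolding maximal_tint_family_def by blast
qed

lemma psi_le_aff_dimension:
  assumes "aff_subspace T" "\<forall>A\<in>S. meets_in t T A"
  shows "psi t S \<le> aff_dimension T"
  unfolding psi_def by (rule Least_le) (use assms in blast)

lemma Tset_nonempty:
  assumes "aff_subspace T" "\<forall>A\<in>S. meets_in t T A"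
  shows "Tset t S \<noteq> {}"
proof -
  have "\<exists>T. aff_subspace T \<and> aff_dimension T = psi t S \<and> (\<forall>A\<in>S. meets_in t T A)"
    using LeastI_ex[of "\<lambda>d. \<exists>T. aff_subspace T \<and> aff_dimension T = d \<and> (\<forall>A\<in>S. meets_in t T A)"] assms
    unfolding psi_def by blast
  then show ?thesis unfolding Tset_def kspace_def by blast
qed

lemma le_psi:
  assumes "A \<in> S" "T \<in> Tset t S"
  shows "t \<le> psi t S"
  using assms meets_in_le_aff_dimension unfolding Tset_def kspace_def by fastforce

theorem mainTheorem11:
  fixes S :: "('a::{field,finite} ^ 'n) set set" and k t :: nat
  assumes "k > t + 1" and "CARD('n) > 2 * k - t"
    and "maximal_tint_family k t S"
  shows "(t \<le> psi t S \<and> psi t S \<le> k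
          \<and> (psi t S = t \<longrightarrow> (\<exists>P. kspace t P \<and> S = pencil k P)))
         \<and> (\<forall>T\<in>Tset t S. \<forall>A. kspace k A \<and> T \<subseteq> A \<longrightarrow> A \<in> S)
         \<and> (\<forall>T1\<in>Tset t S. \<forall>T2\<in>Tset t S. meets_in t T1 T2)"
proof -
  have "t \<le> k" "2 * k < CARD('n) + t" "k \<le> CARD('n)"
    using assms(1,2) by linarith+
  obtain A0 where A0: "A0 \<in> S" "aff_subspace A0" "aff_dimension A0 = k" "\<forall>B\<in>S. meets_in t A0 B"
    using maximal_tint_family_nonempty[OF assms(3) \<open>k \<le> CARD('n)\<close>] assms(3)
    unfolding maximal_tint_family_def kspace_def by blast
  have psi_le: "psi t S \<le> k"
    using psi_le_aff_dimension[OF A0(2,4)] A0(3) by simp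
  obtain T0 where T0: "T0 \<in> Tset t S"
    using Tset_nonempty[OF A0(2,4)] by blast
  have extensions: "\<forall>T\<in>Tset t S. \<forall>A. kspace k A \<and> T \<subseteq> A \<longrightarrow> A \<in> S"
    using maximal_tint_family_memI[OF assms(3)] unfolding Tset_def by blast
  have "psi t S = t \<longrightarrow> (\<exists>P. kspace t P \<and> S = pencil k P)"
    using T0 maximal_tint_family_eq_pencil[OF assms(3)] unfolding Tset_def by auto
  moreover have "\<forall>T1\<in>Tset t S. \<forall>T2\<in>Tset t S. meets_in t T1 T2"
    using maximal_tint_family_meets_in[OF assms(3) \<open>t \<le> k\<close> \<open>2 * k < CARD('n) + t\<close>] psi_le
    unfolding Tset_def kspace_def by auto
  ultimately show ?thesis
    using le_psi[OF A0(1) T0] psi_le extensions by blast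
qed

end
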